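(* Let $G:\mathbb{R}^{d_x}\to\mathbb{R}$ be $\mu_x$-strongly convex and $L_x$-smooth, $F:\mathbb{R}^{d_y}\to\mathbb{R}\cup\{+\infty\}$ proper closed convex with conjugate $F^\star$, $K:\mathbb{R}^{d_x}\to\mathbb{R}^{d_y}$ linear, and $(x^\star,y^\star)$ a solution of $\min_x\max_y\{G(x)+\langle y,Kx\rangle-F^\star(y)\}$. Consider iterates of APDA with Inexact Prox (with any stepsizes $\eta_x,\eta_y,\beta_y>0$, $\theta\in[0,1]$ and any inner method, $\hat x^k\in\mathbb{R}^{d_x}$ being the point it returns), and let $w^{\star k}$ be the exact minimizer of $\Psi^k$. Then for all $k\ge0$ $(1+\frac{\mu_x\eta_x}{2})\frac1{\eta_x}\|x^{k+1}-x^\star\|^2\le\frac1{\eta_x}\|x^k-x^\star\|^2+(2\eta_x+\mu_x\eta_x^2)\|\nabla\Psi^k(\hat x^k)\|^2-\frac1{2\eta_x}\|x^k-w^{\star k}\|^2-2\langle K^\top\bar y^k-K^\top y^\star,\hat x^k-x^\star\rangle-\frac1{L_x}\|\nabla G(\hat x^k)-\nabla G(x^\star)\|^2.$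
   Context: $\mu_x$-strong convexity: $G(x')-G(x'')-\langle\nabla G(x''),x'-x''\rangle\ge\frac{\mu_x}{2}\|x'-x''\|^2$; $L_x$-smoothness: $\|\nabla G(x')-\nabla G(x'')\|\le L_x\|x'-x''\|$. A solution satisfies $\nabla G(x^\star)+K^\top y^\star=0$ and $0\in\partial F^\star(y^\star)-Kx^\star$. APDA with Inexact Prox: given $(x^0,y^0)$, $\bar y^0=y^0$, stepsizes $\eta_x,\eta_y,\beta_y>0$, $\theta\in[0,1]$, number of inner iterations $T$, inner method $\mathcal M$; for $k=0,1,\dots$: $\Psi^k(x)=G(x)+\frac{1}{2\eta_x}\|x-(x^k-\eta_xK^\top\bar y^k)\|^2$; $\hat x^k$ is the output of $T$ iterations of $\mathcal M$ applied to $\Psi^k$ (an approximate minimizer); $x^{k+1}=x^k-\eta_x(\nabla G(\hat x^k)+K^\top\bar y^k)$; $y^{k+1}=y^k-\eta_y(g^{k+1}-K\hat x^k)-\eta_y\beta_yK(K^\top y^k+\nabla G(\hat x^k))$ with $g^{k+1}\in\partial F^\star(y^{k+1})$; $\bar y^{k+1}=y^{k+1}+\theta(y^{k+1}-y^k)$. *)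

theory Defs
  imports "HOL-Analysis.Analysis"
begin

definition grad :: "('a::euclidean_space \<Rightarrow> real) \<Rightarrow> 'a \<Rightarrow> 'a" where
  "grad f x = (THE g. (f has_derivative (\<lambda>h. g \<bullet> h)) (at x))"

definition strongly_convex_grad :: "real \<Rightarrow> ('a::euclidean_space \<Rightarrow> real) \<Rightarrow> bool" where
  "strongly_convex_grad \<mu> f \<longleftrightarrow>
     (\<forall>x' x''. f x' - f x'' - grad f x'' \<bullet> (x' - x'') \<ge> \<mu> / 2 * (norm (x' - x''))\<^sup>2)"

definition smooth_grad :: "real \<Rightarrow> ('a::euclidean_space \<Rightarrow> real) \<Rightarrow> bool" where
  "smooth_grad L f \<longleftrightarrow> (\<forall>x' x''. norm (grad f x' - grad f x'') \<le> L * norm (x' - x''))"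

definition proper_fun :: "('a \<Rightarrow> ereal) \<Rightarrow> bool" where
  "proper_fun F \<longleftrightarrow> (\<forall>x. F x \<noteq> -\<infinity>) \<and> (\<exists>x. F x \<noteq> \<infinity>)"

definition closed_fun :: "('a::topological_space \<Rightarrow> ereal) \<Rightarrow> bool" where
  "closed_fun F \<longleftrightarrow> closed {(x, t::real). F x \<le> ereal t}"

definition convex_fun :: "('a::real_vector \<Rightarrow> ereal) \<Rightarrow> bool" where
  "convex_fun F \<longleftrightarrow> convex {(x, t::real). F x \<le> ereal t}"

definition conjugate :: "('a::real_inner \<Rightarrow> ereal) \<Rightarrow> 'a \<Rightarrow> ereal" where
  "conjugate F y = (SUP x. ereal (y \<bullet> x) - F x)"

definition subdiff :: "('a::real_inner \<Rightarrow> ereal) \<Rightarrow> 'a \<Rightarrow> 'a set" where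
  "subdiff f y = {g. f y \<noteq> \<infinity> \<and> f y \<noteq> -\<infinity> \<and> (\<forall>z. f z \<ge> f y + ereal (g \<bullet> (z - y)))}"

end

(* With e the gradient of the prox objective Psi^k at the inexact point xhat^k, the primal
   update is the gradient step x^(k+1) = xhat^k - eta_x e.  Expanding |x^(k+1) - x_star|^2
   around xhat^k and using grad G(x_star) = -K^T y_star leaves the inner product
   <grad G(xhat^k) - grad G(x_star), xhat^k - x_star>, which strong convexity together with
   co-coercivity (from the descent lemma) bounds below by
   mu_x/2 |xhat^k - x_star|^2 + 1/(2 L_x) |grad G(xhat^k) - grad G(x_star)|^2.
   The remaining error terms are absorbed using
   |x^(k+1) - x_star|^2 <= 2 |xhat^k - x_star|^2 + 2 eta_x^2 |e|^2 and, since Psi^k is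
   (1/eta_x)-strongly convex with minimiser w^k, |xhat^k - w^k| <= eta_x |e|. *)

theory Submission
  imports Defs
begin

lemma grad_eqI:
  fixes f :: "'a::euclidean_space \<Rightarrow> real"
  assumes "(f has_derivative (\<lambda>h. v \<bullet> h)) (at z)"
  shows "grad f z = v"
  unfolding grad_def
proof (rule the_equality)
  fix g assume "(f has_derivative (\<lambda>h. g \<bullet> h)) (at z)"
  then have "(\<lambda>h. g \<bullet> h) = (\<lambda>h. v \<bullet> h)" using assms by (rule has_derivative_unique)
  then have "(g - v) \<bullet> (g - v) = 0" by (metis inner_diff_left diff_self)
  then show "g = v" by simp
qed (rule assms)

lemma has_derivative_grad:
  fixes f :: "'a::euclidean_space \<Rightarrow> real"
  assumes "f differentiable (at z)"
  shows "(f has_derivative (\<lambda>h. grad f z \<bullet> h)) (at z)"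
proof -
  obtain D where D: "(f has_derivative D) (at z)"
    using assms unfolding differentiable_def by blast
  have "D = (\<lambda>h. adjoint D 1 \<bullet> h)"
    using adjoint_works[OF has_derivative_linear[OF D], of _ 1] by (auto simp: inner_commute)
  with D have "(f has_derivative (\<lambda>h. adjoint D 1 \<bullet> h)) (at z)" by simp
  with grad_eqI show ?thesis by metis
qed

lemma grad_eq_0_if_minimum:
  fixes f :: "'a::euclidean_space \<Rightarrow> real"
  assumes "f differentiable (at w)" and "\<And>z. f w \<le> f z"
  shows "grad f w = 0"
proof -
  have "(\<lambda>h. grad f w \<bullet> h) = (\<lambda>h. 0)"
    using has_derivative_local_min[OF has_derivative_grad[OF assms(1)]] assms(2) by simp
  then have "grad f w \<bullet> grad f w = 0" by metis
  then show ?thesis by simp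
qed

lemma has_derivative_add_prox_term:
  fixes f :: "'a::euclidean_space \<Rightarrow> real"
  assumes "f differentiable (at z)"
  shows "((\<lambda>x. f x + 1 / (2 * \<eta>) * (norm (x - u))\<^sup>2) has_derivative
    (\<lambda>h. (grad f z + (1 / \<eta>) *\<^sub>R (z - u)) \<bullet> h)) (at z)"
proof -
  have "((\<lambda>x. f x + 1 / (2 * \<eta>) * ((x - u) \<bullet> (x - u))) has_derivative
      (\<lambda>h. grad f z \<bullet> h + 1 / (2 * \<eta>) * ((z - u) \<bullet> h + h \<bullet> (z - u)))) (at z)"
    by (rule derivative_eq_intros has_derivative_grad[OF assms] | simp)+
  moreover have "1 / (2 * \<eta>) * ((z - u) \<bullet> h + h \<bullet> (z - u)) = (1 / \<eta>) * ((z - u) \<bullet> h)" for h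
    by (simp add: inner_commute)
  ultimately show ?thesis
    by (simp add: power2_norm_eq_inner inner_add_left)
qed

lemma grad_add_prox_term:
  fixes f :: "'a::euclidean_space \<Rightarrow> real"
  assumes "f differentiable (at z)"
  shows "grad (\<lambda>x. f x + 1 / (2 * \<eta>) * (norm (x - u))\<^sup>2) z = grad f z + (1 / \<eta>) *\<^sub>R (z - u)"
  using has_derivative_add_prox_term[OF assms] by (rule grad_eqI)

lemma strongly_convex_grad_add_prox_term:
  fixes f :: "'a::euclidean_space \<Rightarrow> real"
  assumes "\<And>z. f differentiable (at z)" and "strongly_convex_grad \<mu> f"
  shows "strongly_convex_grad (\<mu> + 1 / \<eta>) (\<lambda>x. f x + 1 / (2 * \<eta>) * (norm (x - u))\<^sup>2)"
  unfolding strongly_convex_grad_def grad_add_prox_term[OF assms(1)]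
proof (intro allI)
  fix x y :: 'a
  have "(norm (x - u))\<^sup>2 - (norm (y - u))\<^sup>2 - 2 * ((y - u) \<bullet> (x - y)) = (norm (x - y))\<^sup>2"
    by (simp add: power2_norm_eq_inner inner_diff_left inner_diff_right inner_commute algebra_simps)
  then have "1 / (2 * \<eta>) * ((norm (x - u))\<^sup>2 - (norm (y - u))\<^sup>2 - 2 * ((y - u) \<bullet> (x - y)))
      = 1 / (2 * \<eta>) * (norm (x - y))\<^sup>2"
    by simp
  moreover have "1 / \<eta> = 2 * (1 / (2 * \<eta>))" by simp
  ultimately have "1 / (2 * \<eta>) * (norm (x - u))\<^sup>2 - 1 / (2 * \<eta>) * (norm (y - u))\<^sup>2
      - ((1 / \<eta>) *\<^sub>R (y - u)) \<bullet> (x - y) = 1 / (2 * \<eta>) * (norm (x - y))\<^sup>2"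
    by (simp only: inner_scaleR_left right_diff_distrib mult.assoc mult.left_commute)
  moreover have "\<mu> / 2 * (norm (x - y))\<^sup>2 \<le> f x - f y - grad f y \<bullet> (x - y)"
    using assms(2) unfolding strongly_convex_grad_def by blast
  ultimately show "(\<mu> + 1 / \<eta>) / 2 * (norm (x - y))\<^sup>2 \<le> f x + 1 / (2 * \<eta>) * (norm (x - u))\<^sup>2
      - (f y + 1 / (2 * \<eta>) * (norm (y - u))\<^sup>2) - (grad f y + (1 / \<eta>) *\<^sub>R (y - u)) \<bullet> (x - y)"
    by (simp add: inner_add_left add_divide_distrib distrib_right)
qed

lemma strongly_convex_grad_mono:
  assumes "strongly_convex_grad \<mu> f" and "\<mu>' \<le> \<mu>"
  shows "strongly_convex_grad \<mu>' f"
  using assms unfolding strongly_convex_grad_def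
  by (meson divide_right_mono mult_right_mono order_trans zero_le_numeral zero_le_power2)

lemma strongly_convex_grad_inner_ge:
  assumes "strongly_convex_grad \<mu> f"
  shows "\<mu> * (norm (x - y))\<^sup>2 \<le> (grad f x - grad f y) \<bullet> (x - y)"
proof -
  have "\<mu> / 2 * (norm (x - y))\<^sup>2 \<le> f x - f y - grad f y \<bullet> (x - y)"
    and "\<mu> / 2 * (norm (y - x))\<^sup>2 \<le> f y - f x - grad f x \<bullet> (y - x)"
    using assms unfolding strongly_convex_grad_def by blast+
  then show ?thesis
    by (simp add: norm_minus_commute inner_diff_left inner_diff_right)
qed

lemma smooth_grad_descent:
  fixes f :: "'a::euclidean_space \<Rightarrow> real"
  assumes diff: "\<And>z. f differentiable (at z)" and smooth: "smooth_grad L f"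
  shows "f z \<le> f y + grad f y \<bullet> (z - y) + L / 2 * (norm (z - y))\<^sup>2"
proof -
  define d where "d = z - y"
  define \<phi> where "\<phi> t = f (y + t *\<^sub>R d) - t * (grad f y \<bullet> d) - L / 2 * t\<^sup>2 * (norm d)\<^sup>2" for t
  define \<phi>' where "\<phi>' t s = s * ((grad f (y + t *\<^sub>R d) - grad f y) \<bullet> d - L * t * (norm d)\<^sup>2)" for t s
  have "(\<phi> has_derivative \<phi>' t) (at t within {0..1})" for t
  proof -
    have "((\<lambda>t. y + t *\<^sub>R d) has_derivative (\<lambda>s. s *\<^sub>R d)) (at t within {0..1})"
      by (auto intro!: derivative_eq_intros)
    from has_derivative_compose[OF this has_derivative_grad[OF diff]]
    have chain: "((\<lambda>t. f (y + t *\<^sub>R d)) has_derivative (\<lambda>s. grad f (y + t *\<^sub>R d) \<bullet> (s *\<^sub>R d)))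
        (at t within {0..1})"
      by (simp add: o_def)
    show ?thesis unfolding \<phi>_def[abs_def] \<phi>'_def
      by (rule derivative_eq_intros chain | simp)+
        (auto simp: algebra_simps power2_eq_square)
  qed
  then obtain \<xi> where \<xi>: "\<xi> \<in> {0..1}" "\<phi> 1 - \<phi> 0 = \<phi>' \<xi> 1"
    using mvt_very_simple[of 0 1 \<phi> \<phi>'] by auto
  have "(grad f (y + \<xi> *\<^sub>R d) - grad f y) \<bullet> d \<le> norm (grad f (y + \<xi> *\<^sub>R d) - grad f y) * norm d"
    by (rule norm_cauchy_schwarz)
  also have "\<dots> \<le> L * norm (\<xi> *\<^sub>R d) * norm d"
    using smooth unfolding smooth_grad_def by (metis add_diff_cancel_left' mult_right_mono norm_ge_zero)
  also have "\<dots> = L * \<xi> * (norm d)\<^sup>2"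
    using \<xi>(1) by (simp add: power2_eq_square)
  finally have "\<phi> 1 \<le> \<phi> 0"
    using \<xi>(2) unfolding \<phi>'_def by simp
  then show ?thesis
    unfolding \<phi>_def d_def by simp
qed

lemma smooth_convex_grad_lower_bound:
  fixes f :: "'a::euclidean_space \<Rightarrow> real"
  assumes diff: "\<And>z. f differentiable (at z)" and smooth: "smooth_grad L f" and "L > 0"
    and convex: "strongly_convex_grad 0 f"
  shows "f x + grad f x \<bullet> (y - x) + 1 / (2 * L) * (norm (grad f y - grad f x))\<^sup>2 \<le> f y"
proof -
  define r where "r = grad f y - grad f x"
  \<comment> \<open>z minimises the gap between the quadratic upper bound at y and the linear lower bound at x\<close>
  define z where "z = y - (1 / L) *\<^sub>R r"
  have "0 / 2 * (norm (z - x))\<^sup>2 \<le> f z - f x - grad f x \<bullet> (z - x)"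
    using convex unfolding strongly_convex_grad_def by blast
  then have "f x + grad f x \<bullet> (z - x) \<le> f z" by simp
  also have "\<dots> \<le> f y + grad f y \<bullet> (z - y) + L / 2 * (norm (z - y))\<^sup>2"
    by (rule smooth_grad_descent[OF diff smooth])
  also have "\<dots> = f y - (1 / L) * (grad f y \<bullet> r) + 1 / (2 * L) * (norm r)\<^sup>2"
    using \<open>L > 0\<close> by (simp add: z_def power2_eq_square)
  finally have "f x + grad f x \<bullet> (y - x) + (1 / L) * ((grad f y - grad f x) \<bullet> r) - 1 / (2 * L) * (norm r)\<^sup>2 \<le> f y"
    by (simp add: z_def inner_diff_right inner_diff_left algebra_simps)
  moreover have "(1 / L) * (r \<bullet> r) - 1 / (2 * L) * (norm r)\<^sup>2 = 1 / (2 * L) * (norm r)\<^sup>2"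
    by (simp add: power2_norm_eq_inner)
  ultimately show ?thesis
    unfolding r_def by linarith
qed

lemma strongly_convex_smooth_grad_inner_ge:
  fixes f :: "'a::euclidean_space \<Rightarrow> real"
  assumes diff: "\<And>z. f differentiable (at z)" and sc: "strongly_convex_grad \<mu> f" and "0 \<le> \<mu>"
    and smooth: "smooth_grad L f" and "L > 0"
  shows "\<mu> / 2 * (norm (x - y))\<^sup>2 + 1 / (2 * L) * (norm (grad f x - grad f y))\<^sup>2
    \<le> (grad f x - grad f y) \<bullet> (x - y)"
proof -
  have "strongly_convex_grad 0 f"
    using sc \<open>0 \<le> \<mu>\<close> by (rule strongly_convex_grad_mono)
  then have "f y + grad f y \<bullet> (x - y) + 1 / (2 * L) * (norm (grad f x - grad f y))\<^sup>2 \<le> f x"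
    using diff smooth \<open>L > 0\<close> smooth_convex_grad_lower_bound by blast
  moreover have "\<mu> / 2 * (norm (y - x))\<^sup>2 \<le> f y - f x - grad f x \<bullet> (y - x)"
    using sc unfolding strongly_convex_grad_def by blast
  ultimately show ?thesis
    by (simp add: norm_minus_commute inner_diff_left inner_diff_right)
qed

lemma norm_le_if_inner_ge:
  fixes d v :: "'a::real_inner"
  assumes "c > 0" and "c * (norm v)\<^sup>2 \<le> d \<bullet> v"
  shows "c * norm v \<le> norm d"
proof (cases "v = 0")
  case False
  have "c * norm v * norm v \<le> norm d * norm v"
    using assms(2) norm_cauchy_schwarz[of d v] by (simp add: power2_eq_square mult.assoc)
  then show ?thesis
    using False by simp
qed (use assms in simp)

lemma norm_diff_le_grad_prox_objective:
  fixes f :: "'a::euclidean_space \<Rightarrow> real"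
  assumes diff: "\<And>z. f differentiable (at z)" and convex: "strongly_convex_grad 0 f" and "\<eta> > 0"
    and \<Psi>_eq: "\<And>z. \<Psi> z = f z + 1 / (2 * \<eta>) * (norm (z - u))\<^sup>2"
    and minimum: "\<And>z. \<Psi> w \<le> \<Psi> z"
  shows "norm (x - w) \<le> \<eta> * norm (grad \<Psi> x)"
proof -
  have \<Psi>: "\<Psi> = (\<lambda>z. f z + 1 / (2 * \<eta>) * (norm (z - u))\<^sup>2)"
    using \<Psi>_eq by blast
  have "grad \<Psi> w = 0"
    using has_derivative_add_prox_term[OF diff] minimum
    unfolding \<Psi> by (intro grad_eq_0_if_minimum differentiableI)
  moreover have "strongly_convex_grad (1 / \<eta>) \<Psi>"
    using strongly_convex_grad_add_prox_term[OF diff convex] by (simp add: \<Psi>)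
  ultimately have "(1 / \<eta>) * (norm (x - w))\<^sup>2 \<le> grad \<Psi> x \<bullet> (x - w)"
    using strongly_convex_grad_inner_ge[of "1 / \<eta>" \<Psi> x w] by simp
  then have "(1 / \<eta>) * norm (x - w) \<le> norm (grad \<Psi> x)"
    using \<open>\<eta> > 0\<close> by (intro norm_le_if_inner_ge) auto
  then show ?thesis
    using \<open>\<eta> > 0\<close> by (simp add: field_simps)
qed

lemma power2_norm_diff_le:
  fixes u v :: "'a::real_inner"
  shows "(norm (u - v))\<^sup>2 \<le> 2 * (norm u)\<^sup>2 + 2 * (norm v)\<^sup>2"
proof -
  have "(norm (u - v))\<^sup>2 + (norm (u + v))\<^sup>2 = 2 * (norm u)\<^sup>2 + 2 * (norm v)\<^sup>2"
    by (simp add: power2_norm_eq_inner inner_add_left inner_add_right inner_diff_left inner_diff_right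
        inner_commute)
  then show ?thesis
    by (metis le_add_same_cancel1 zero_le_power2)
qed

lemma power2_norm_step_expansion:
  fixes a d h s :: "'a::real_inner"
  shows "(norm (a - d - s))\<^sup>2
    = (norm (a - s))\<^sup>2 - 2 * (d \<bullet> (h - s)) - (norm (a - h))\<^sup>2 + (norm (d + h - a))\<^sup>2"
  by (simp add: power2_norm_eq_inner inner_add_left inner_add_right inner_diff_left inner_diff_right
      inner_commute algebra_simps)

lemma prox_step_eq_grad_step:
  fixes f :: "'a::euclidean_space \<Rightarrow> real"
  assumes diff: "f differentiable (at h)" and "\<eta> \<noteq> 0"
    and \<Psi>_eq: "\<And>z. \<Psi> z = f z + 1 / (2 * \<eta>) * (norm (z - (a - \<eta> *\<^sub>R b)))\<^sup>2"
  shows "a - \<eta> *\<^sub>R (grad f h + b) = h - \<eta> *\<^sub>R grad \<Psi> h"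
proof -
  have \<Psi>: "\<Psi> = (\<lambda>z. f z + 1 / (2 * \<eta>) * (norm (z - (a - \<eta> *\<^sub>R b)))\<^sup>2)"
    using \<Psi>_eq by blast
  show ?thesis
    unfolding \<Psi> grad_add_prox_term[OF diff] using \<open>\<eta> \<noteq> 0\<close> by (simp add: algebra_simps)
qed

lemma inexact_prox_step_expansion:
  fixes f :: "'a::euclidean_space \<Rightarrow> real"
  assumes diff: "f differentiable (at h)" and "\<eta> \<noteq> 0" and opt: "grad f s + bs = 0"
    and \<Psi>_eq: "\<And>z. \<Psi> z = f z + 1 / (2 * \<eta>) * (norm (z - (a - \<eta> *\<^sub>R b)))\<^sup>2"
  shows "(norm (a - \<eta> *\<^sub>R (grad f h + b) - s))\<^sup>2 = (norm (a - s))\<^sup>2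
    - 2 * \<eta> * ((grad f h - grad f s) \<bullet> (h - s)) - 2 * \<eta> * ((b - bs) \<bullet> (h - s))
    - (norm (a - h))\<^sup>2 + \<eta>\<^sup>2 * (norm (grad \<Psi> h))\<^sup>2"
proof -
  have step: "\<eta> *\<^sub>R (grad f h + b) + h - a = \<eta> *\<^sub>R grad \<Psi> h"
    using prox_step_eq_grad_step[OF diff \<open>\<eta> \<noteq> 0\<close> \<Psi>_eq] by (simp add: algebra_simps)
  have "(norm (a - \<eta> *\<^sub>R (grad f h + b) - s))\<^sup>2 = (norm (a - s))\<^sup>2
      - 2 * ((\<eta> *\<^sub>R (grad f h + b)) \<bullet> (h - s)) - (norm (a - h))\<^sup>2 + (norm (\<eta> *\<^sub>R grad \<Psi> h))\<^sup>2"
    unfolding step[symmetric] by (rule power2_norm_step_expansion)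
  also have "(\<eta> *\<^sub>R (grad f h + b)) \<bullet> (h - s)
      = \<eta> * ((grad f h - grad f s) \<bullet> (h - s)) + \<eta> * ((b - bs) \<bullet> (h - s))"
    using opt by (simp add: inner_diff_left inner_add_left algebra_simps add_eq_0_iff2)
  also have "(norm (\<eta> *\<^sub>R grad \<Psi> h))\<^sup>2 = \<eta>\<^sup>2 * (norm (grad \<Psi> h))\<^sup>2"
    by (simp add: power_mult_distrib)
  finally show ?thesis
    by (simp add: algebra_simps)
qed

lemma inexact_prox_step_bound_scaled:
  fixes f :: "'a::euclidean_space \<Rightarrow> real"
  assumes diff: "\<And>z. f differentiable (at z)" and sc: "strongly_convex_grad \<mu> f" and "0 \<le> \<mu>"
    and smooth: "smooth_grad L f" and "L > 0" and "\<eta> > 0"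
    and opt: "grad f s + bs = 0"
    and \<Psi>_eq: "\<And>z. \<Psi> z = f z + 1 / (2 * \<eta>) * (norm (z - (a - \<eta> *\<^sub>R b)))\<^sup>2"
    and minimum: "\<And>z. \<Psi> w \<le> \<Psi> z"
  shows "(1 + \<mu> * \<eta> / 2) * (norm (a - \<eta> *\<^sub>R (grad f h + b) - s))\<^sup>2
    \<le> (norm (a - s))\<^sup>2 + (2 * \<eta>\<^sup>2 + \<mu> * \<eta> ^ 3) * (norm (grad \<Psi> h))\<^sup>2 - (norm (a - w))\<^sup>2 / 2
      - 2 * \<eta> * ((b - bs) \<bullet> (h - s)) - \<eta> / L * (norm (grad f h - grad f s))\<^sup>2"
proof -
  define a' where "a' = a - \<eta> *\<^sub>R (grad f h + b)"
  define e where "e = grad \<Psi> h"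
  have "\<eta> \<noteq> 0"
    using \<open>\<eta> > 0\<close> by simp
  have expand: "(norm (a' - s))\<^sup>2 = (norm (a - s))\<^sup>2
      - 2 * \<eta> * ((grad f h - grad f s) \<bullet> (h - s)) - 2 * \<eta> * ((b - bs) \<bullet> (h - s))
      - (norm (a - h))\<^sup>2 + \<eta>\<^sup>2 * (norm e)\<^sup>2"
    unfolding a'_def e_def using diff \<open>\<eta> \<noteq> 0\<close> opt \<Psi>_eq by (rule inexact_prox_step_expansion)
  have a'_eq: "a' - s = (h - s) - \<eta> *\<^sub>R e"
    unfolding a'_def e_def prox_step_eq_grad_step[OF diff \<open>\<eta> \<noteq> 0\<close> \<Psi>_eq] by simp
  have coercive: "\<eta> * (\<mu> / 2 * (norm (h - s))\<^sup>2 + 1 / (2 * L) * (norm (grad f h - grad f s))\<^sup>2)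
      \<le> \<eta> * ((grad f h - grad f s) \<bullet> (h - s))"
    using strongly_convex_smooth_grad_inner_ge[OF diff sc \<open>0 \<le> \<mu>\<close> smooth \<open>L > 0\<close>] \<open>\<eta> > 0\<close>
    by simp
  have "(norm (a' - s))\<^sup>2 \<le> 2 * (norm (h - s))\<^sup>2 + 2 * (\<eta>\<^sup>2 * (norm e)\<^sup>2)"
    using power2_norm_diff_le[of "h - s" "\<eta> *\<^sub>R e"] \<open>\<eta> > 0\<close>
    by (simp add: a'_eq power_mult_distrib)
  then have near_s: "\<mu> * \<eta> / 2 * (norm (a' - s))\<^sup>2
      \<le> \<mu> * \<eta> / 2 * (2 * (norm (h - s))\<^sup>2 + 2 * (\<eta>\<^sup>2 * (norm e)\<^sup>2))"
    using \<open>\<eta> > 0\<close> \<open>0 \<le> \<mu>\<close> by (intro mult_left_mono) auto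
  have "norm (h - w) \<le> \<eta> * norm e"
    unfolding e_def using diff strongly_convex_grad_mono[OF sc \<open>0 \<le> \<mu>\<close>] \<open>\<eta> > 0\<close> \<Psi>_eq minimum
    by (rule norm_diff_le_grad_prox_objective)
  then have "(norm (w - h))\<^sup>2 \<le> \<eta>\<^sup>2 * (norm e)\<^sup>2"
    by (metis norm_ge_zero norm_minus_commute power_mono power_mult_distrib)
  then have near_w: "(norm (a - w))\<^sup>2 \<le> 2 * (norm (a - h))\<^sup>2 + 2 * (\<eta>\<^sup>2 * (norm e)\<^sup>2)"
    using power2_norm_diff_le[of "a - h" "w - h"] by simp
  \<comment> \<open>the sum of expand, twice coercive, near_s and half of near_w\<close>
  show ?thesis
    using expand coercive near_s near_w unfolding a'_def e_def
    by (simp add: algebra_simps power2_eq_square power3_eq_cube)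
qed

lemma inexact_prox_step_bound:
  fixes f :: "'a::euclidean_space \<Rightarrow> real"
  assumes diff: "\<And>z. f differentiable (at z)" and sc: "strongly_convex_grad \<mu> f" and "0 \<le> \<mu>"
    and smooth: "smooth_grad L f" and "L > 0" and "\<eta> > 0"
    and opt: "grad f s + bs = 0"
    and \<Psi>_eq: "\<And>z. \<Psi> z = f z + 1 / (2 * \<eta>) * (norm (z - (a - \<eta> *\<^sub>R b)))\<^sup>2"
    and minimum: "\<And>z. \<Psi> w \<le> \<Psi> z"
    and step: "a' = a - \<eta> *\<^sub>R (grad f h + b)"
  shows "(1 + \<mu> * \<eta> / 2) * (1 / \<eta>) * (norm (a' - s))\<^sup>2
    \<le> (1 / \<eta>) * (norm (a - s))\<^sup>2 + (2 * \<eta> + \<mu> * \<eta>\<^sup>2) * (norm (grad \<Psi> h))\<^sup>2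
      - (1 / (2 * \<eta>)) * (norm (a - w))\<^sup>2 - 2 * ((b - bs) \<bullet> (h - s))
      - (1 / L) * (norm (grad f h - grad f s))\<^sup>2"
proof -
  let ?rhs = "(norm (a - s))\<^sup>2 + (2 * \<eta>\<^sup>2 + \<mu> * \<eta> ^ 3) * (norm (grad \<Psi> h))\<^sup>2
    - (norm (a - w))\<^sup>2 / 2 - 2 * \<eta> * ((b - bs) \<bullet> (h - s)) - \<eta> / L * (norm (grad f h - grad f s))\<^sup>2"
  have "(1 + \<mu> * \<eta> / 2) * (norm (a' - s))\<^sup>2 / \<eta> \<le> ?rhs / \<eta>"
    using inexact_prox_step_bound_scaled[OF assms(1-9)] \<open>\<eta> > 0\<close>
    unfolding step by (intro divide_right_mono) auto
  moreover have "?rhs / \<eta> = (1 / \<eta>) * (norm (a - s))\<^sup>2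
      + (2 * \<eta> + \<mu> * \<eta>\<^sup>2) * (norm (grad \<Psi> h))\<^sup>2 - (1 / (2 * \<eta>)) * (norm (a - w))\<^sup>2
      - 2 * ((b - bs) \<bullet> (h - s)) - (1 / L) * (norm (grad f h - grad f s))\<^sup>2"
    using \<open>\<eta> > 0\<close> by (simp add: field_simps power2_eq_square power3_eq_cube)
  ultimately show ?thesis
    by simp
qed

theorem lemma9:
  fixes G :: "real^'n \<Rightarrow> real"
    and F :: "real^'m \<Rightarrow> ereal"
    and K :: "real^'n^'m"
    and \<mu>x Lx \<eta>x \<eta>y \<beta>y \<theta> :: real
    and xs :: "real^'n" and ys :: "real^'m"
    and x xhat w :: "nat \<Rightarrow> real^'n"
    and y ybar g :: "nat \<Rightarrow> real^'m"
    and \<Psi> :: "nat \<Rightarrow> real^'n \<Rightarrow> real"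
    and k :: nat
  assumes G_diff: "\<And>z. G differentiable (at z)"
    and G_sc: "strongly_convex_grad \<mu>x G" and mu_pos: "\<mu>x > 0"
    and G_smooth: "smooth_grad Lx G" and L_pos: "Lx > 0"
    and F_proper: "proper_fun F" and F_closed: "closed_fun F" and F_convex: "convex_fun F"
    and sol1: "grad G xs + transpose K *v ys = 0"
    and sol2: "K *v xs \<in> subdiff (conjugate F) ys"
    and steps: "\<eta>x > 0" "\<eta>y > 0" "\<beta>y > 0" "0 \<le> \<theta>" "\<theta> \<le> 1"
    and ybar0: "ybar 0 = y 0"
    and Psi_def: "\<And>j z. \<Psi> j z = G z + 1 / (2 * \<eta>x) *
                   (norm (z - (x j - \<eta>x *\<^sub>R (transpose K *v ybar j))))\<^sup>2"
    and w_min: "\<And>j z. \<Psi> j (w j) \<le> \<Psi> j z"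
    and x_upd: "\<And>j. x (Suc j) = x j - \<eta>x *\<^sub>R (grad G (xhat j) + transpose K *v ybar j)"
    and y_upd: "\<And>j. y (Suc j) = y j - \<eta>y *\<^sub>R (g (Suc j) - K *v xhat j)
                   - (\<eta>y * \<beta>y) *\<^sub>R (K *v (transpose K *v y j + grad G (xhat j)))"
    and g_sub: "\<And>j. g (Suc j) \<in> subdiff (conjugate F) (y (Suc j))"
    and ybar_upd: "\<And>j. ybar (Suc j) = y (Suc j) + \<theta> *\<^sub>R (y (Suc j) - y j)"
  shows "(1 + \<mu>x * \<eta>x / 2) * (1 / \<eta>x) * (norm (x (Suc k) - xs))\<^sup>2
     \<le> (1 / \<eta>x) * (norm (x k - xs))\<^sup>2
       + (2 * \<eta>x + \<mu>x * \<eta>x\<^sup>2) * (norm (grad (\<Psi> k) (xhat k)))\<^sup>2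
       - (1 / (2 * \<eta>x)) * (norm (x k - w k))\<^sup>2
       - 2 * ((transpose K *v ybar k - transpose K *v ys) \<bullet> (xhat k - xs))
       - (1 / Lx) * (norm (grad G (xhat k) - grad G xs))\<^sup>2"
  using inexact_prox_step_bound[OF G_diff G_sc _ G_smooth L_pos _ sol1 Psi_def w_min x_upd]
    mu_pos steps(1) by simp

end
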